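(* Let $n\ge 2$ be an integer. If $G$ is a graph on $2n+1$ vertices with at least $n^2+n$ edges such that $G$ does not contain two distinct vertices of the same degree joined by a path of length three, then $G$ is isomorphic to the complete bipartite graph $K_{n,n+1}$. (Equivalently, $K_{n,n+1}$ is the unique such graph.)
   Context: A path of length three joining vertices $a$ and $b$ is a path $a\,x\,y\,b$ with four distinct vertices and three edges $ax,xy,yb$. Graphs are finite and simple. *)

theory Defs
  imports Main
begin

definition simple_graph :: "'a set \<Rightarrow> ('a \<Rightarrow> 'a \<Rightarrow> bool) \<Rightarrow> bool" where
  "simple_graph V E \<longleftrightarrow> finite V \<and>
     (\<forall>u v. E u v \<longrightarrow> u \<in> V \<and> v \<in> V) \<and>
     (\<forall>u v. E u v \<longrightarrow> E v u) \<and> (\<forall>v. \<not> E v v)"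

definition edge_set :: "'a set \<Rightarrow> ('a \<Rightarrow> 'a \<Rightarrow> bool) \<Rightarrow> 'a set set" where
  "edge_set V E = {{u, v} | u v. u \<in> V \<and> v \<in> V \<and> E u v}"

definition num_edges :: "'a set \<Rightarrow> ('a \<Rightarrow> 'a \<Rightarrow> bool) \<Rightarrow> nat" where
  "num_edges V E = card (edge_set V E)"

definition degree :: "'a set \<Rightarrow> ('a \<Rightarrow> 'a \<Rightarrow> bool) \<Rightarrow> 'a \<Rightarrow> nat" where
  "degree V E v = card {u \<in> V. E v u}"

definition path3 :: "'a set \<Rightarrow> ('a \<Rightarrow> 'a \<Rightarrow> bool) \<Rightarrow> 'a \<Rightarrow> 'a \<Rightarrow> bool" where
  "path3 V E a b \<longleftrightarrow> (\<exists>x y. a \<in> V \<and> x \<in> V \<and> y \<in> V \<and> b \<in> V \<and>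
      distinct [a, x, y, b] \<and> E a x \<and> E x y \<and> E y b)"

definition graph_iso :: "'a set \<Rightarrow> ('a \<Rightarrow> 'a \<Rightarrow> bool) \<Rightarrow> 'b set \<Rightarrow> ('b \<Rightarrow> 'b \<Rightarrow> bool) \<Rightarrow> bool" where
  "graph_iso V E W F \<longleftrightarrow> (\<exists>f. bij_betw f V W \<and> (\<forall>u\<in>V. \<forall>v\<in>V. E u v \<longleftrightarrow> F (f u) (f v)))"

definition Kbip_verts :: "nat \<Rightarrow> nat \<Rightarrow> nat set" where
  "Kbip_verts m k = {0..<m+k}"

definition Kbip_edge :: "nat \<Rightarrow> nat \<Rightarrow> nat \<Rightarrow> nat \<Rightarrow> bool" where
  "Kbip_edge m k i j \<longleftrightarrow> i < m + k \<and> j < m + k \<and> ((i < m \<and> m \<le> j) \<or> (j < m \<and> m \<le> i))"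

end

theory Submission
  imports Defs
begin

text \<open>Let x be a vertex of maximum degree \<Delta>, Y its neighbourhood and R = V - Y (so x \<in> R),
\<rho> = |R|. Two distinct vertices of Y with equal degree are joined by a path of length two through x,
so neither has a further neighbour in Y and their degree is at most \<rho> + 1. Hence in Y every degree
\<ge> \<rho> + 2 occurs at most once and \<rho> + 1 at most twice, which caps the degree sum of Y.
The edge bound forces \<Delta> > n; with n = \<rho> + j and \<Delta> = \<rho> + 2j + 1 the capped degree sums
leave no room unless j = 0, no vertex of Y has degree \<Delta>, every vertex of Y has degree \<rho> and
every vertex of R has degree \<Delta>. Then Y is independent and the graph is complete bipartite
between R and Y.\<close>

lemma sum_le_if_inj_on_ge_2:
  fixes f :: "'a \<Rightarrow> nat"
  assumes A: "finite A" and bound: "\<And>a. a \<in> A \<Longrightarrow> f a \<le> t"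
    and inj: "inj_on f {a \<in> A. 2 \<le> f a}"
  shows "sum f A \<le> card {a \<in> A. f a = 1} + \<Sum>{2..t}"
proof -
  have split: "sum f A = (\<Sum>a\<in>A. if f a = 1 then 1 else 0) + (\<Sum>a\<in>A. if 2 \<le> f a then f a else 0)"
    by (subst sum.distrib[symmetric]) (rule sum.cong, auto)
  have ones: "(\<Sum>a\<in>A. if f a = 1 then 1 else 0) = card {a \<in> A. f a = 1}"
    using sum.inter_filter[OF A, of "\<lambda>_. 1::nat" "\<lambda>a. f a = 1"] by simp
  have large: "(\<Sum>a\<in>A. if 2 \<le> f a then f a else 0) = \<Sum>(f ` {a \<in> A. 2 \<le> f a})"
    using sum.inter_filter[OF A, of f] sum.reindex[OF inj, of id] by simp
  have "\<Sum>(f ` {a \<in> A. 2 \<le> f a}) \<le> \<Sum>{2..t}"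
    by (rule sum_mono2) (use bound in auto)
  then show ?thesis using split ones large by linarith
qed

lemma double_sum_atLeastAtMost_2:
  fixes t :: nat
  assumes "1 \<le> t"
  shows "2 * \<Sum>{2..t} + 2 = t * (t + 1)"
proof -
  have "2 * 1 \<le> t * (t + 1)"
    using mult_le_mono[OF assms, of 2 "t + 1"] assms by simp
  moreover have "even (t * (t + 1))" by simp
  ultimately show ?thesis
    using Sum_Icc_nat[of 2 t] by (auto elim!: evenE)
qed

lemma eq_bound_if_sum_ge:
  fixes f :: "'a \<Rightarrow> nat"
  assumes "finite A" and "\<And>a. a \<in> A \<Longrightarrow> f a \<le> k" and "card A * k \<le> sum f A" and "a \<in> A"
  shows "f a = k"
proof (rule sum_mono_inv[of f A "\<lambda>_. k"])
  show "sum f A = (\<Sum>_\<in>A. k)"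
    using sum_bounded_above[of A f k] assms(2,3) by fastforce
qed (use assms in auto)

lemma graph_iso_Kbip_if_complete_bipartite:
  assumes "finite A" "finite B" "A \<inter> B = {}" "card A = m" "card B = k"
    and edges: "\<forall>u\<in>A \<union> B. \<forall>v\<in>A \<union> B. E u v \<longleftrightarrow> (u \<in> A \<and> v \<in> B) \<or> (u \<in> B \<and> v \<in> A)"
  shows "graph_iso (A \<union> B) E (Kbip_verts m k) (Kbip_edge m k)"
proof -
  obtain g where g: "bij_betw g A {0..<m}"
    using ex_bij_betw_finite_nat[OF \<open>finite A\<close>] \<open>card A = m\<close> by blast
  obtain h where h: "bij_betw h B {0..<k}"
    using ex_bij_betw_finite_nat[OF \<open>finite B\<close>] \<open>card B = k\<close> by blast
  define f where "f v = (if v \<in> A then g v else m + h v)" for v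
  have "bij_betw (\<lambda>i. m + i) {0..<k} {m..<m + k}"
    by (rule bij_betw_imageI) (auto simp: image_add_atLeastLessThan)
  from bij_betw_trans[OF h this] have "bij_betw (\<lambda>v. m + h v) B {m..<m + k}"
    by (simp add: comp_def)
  moreover have "bij_betw f B {m..<m + k} \<longleftrightarrow> bij_betw (\<lambda>v. m + h v) B {m..<m + k}"
    using \<open>A \<inter> B = {}\<close> by (intro bij_betw_cong) (auto simp: f_def)
  ultimately have fB: "bij_betw f B {m..<m + k}" by simp
  have fA: "bij_betw f A {0..<m}"
    using g by (rule bij_betw_cong[THEN iffD1, rotated]) (simp add: f_def)
  have "bij_betw f (A \<union> B) ({0..<m} \<union> {m..<m + k})"
    by (rule bij_betw_combine[OF fA fB]) auto
  moreover have "{0..<m} \<union> {m..<m + k} = Kbip_verts m k"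
    unfolding Kbip_verts_def by auto
  ultimately have bij: "bij_betw f (A \<union> B) (Kbip_verts m k)" by simp
  have edge_iff: "E u v \<longleftrightarrow> Kbip_edge m k (f u) (f v)" if "u \<in> A \<union> B" "v \<in> A \<union> B" for u v
  proof -
    have side: "(f w < m \<longleftrightarrow> w \<in> A) \<and> f w < m + k" if "w \<in> A \<union> B" for w
      using that bij_betw_apply[OF fA] bij_betw_apply[OF fB] \<open>A \<inter> B = {}\<close> by fastforce
    have "Kbip_edge m k (f u) (f v) \<longleftrightarrow> (u \<in> A \<and> v \<notin> A) \<or> (v \<in> A \<and> u \<notin> A)"
      unfolding Kbip_edge_def using side[OF \<open>u \<in> A \<union> B\<close>] side[OF \<open>v \<in> A \<union> B\<close>]
      by (metis not_less)
    moreover have "E u v \<longleftrightarrow> (u \<in> A \<and> v \<notin> A) \<or> (v \<in> A \<and> u \<notin> A)"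
      using edges that \<open>A \<inter> B = {}\<close> by blast
    ultimately show ?thesis by simp
  qed
  show ?thesis
    unfolding graph_iso_def by (intro exI[of _ f] conjI bij ballI edge_iff)
qed

locale finite_simple_graph =
  fixes V :: "'a set" and E :: "'a \<Rightarrow> 'a \<Rightarrow> bool"
  assumes simple: "simple_graph V E"
begin

abbreviation nbhd :: "'a \<Rightarrow> 'a set" where "nbhd v \<equiv> {u \<in> V. E v u}"
abbreviation deg :: "'a \<Rightarrow> nat" where "deg \<equiv> degree V E"

lemma finite_V: "finite V"
  using simple unfolding simple_graph_def by blast

lemma edge_in_V: "E u v \<Longrightarrow> u \<in> V \<and> v \<in> V"
  using simple unfolding simple_graph_def by blast

lemma edge_sym: "E u v \<Longrightarrow> E v u"
  using simple unfolding simple_graph_def by blast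

lemma edge_irrefl [simp]: "\<not> E v v"
  using simple unfolding simple_graph_def by blast

lemma edge_neq: "E u v \<Longrightarrow> u \<noteq> v"
  by auto

lemma finite_nbhd: "finite (nbhd v)"
  using finite_V by simp

lemma degree_eq_card_nbhd: "deg v = card (nbhd v)"
  unfolding degree_def ..

lemma degree_le_card: "nbhd v \<subseteq> S \<Longrightarrow> finite S \<Longrightarrow> deg v \<le> card S"
  by (simp add: degree_eq_card_nbhd card_mono)

lemma card_le_degree: "S \<subseteq> nbhd v \<Longrightarrow> card S \<le> deg v"
  by (simp add: degree_eq_card_nbhd card_mono finite_nbhd)

lemma nbhd_eq_if_card_le_degree:
  "nbhd v \<subseteq> S \<Longrightarrow> finite S \<Longrightarrow> card S \<le> deg v \<Longrightarrow> nbhd v = S"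
  by (metis card_mono card_subset_eq degree_eq_card_nbhd le_antisym)

lemma exists_max_degree:
  assumes "V \<noteq> {}"
  obtains x where "x \<in> V" "\<And>v. v \<in> V \<Longrightarrow> deg v \<le> deg x"
proof -
  have "Max (deg ` V) \<in> deg ` V"
    using finite_V assms by simp
  then obtain x where "x \<in> V" "deg x = Max (deg ` V)"
    by (metis imageE)
  moreover have "deg v \<le> Max (deg ` V)" if "v \<in> V" for v
    using finite_V that by simp
  ultimately show ?thesis
    using that[of x] by simp
qed

lemma sum_degree_eq_twice_num_edges: "(\<Sum>v\<in>V. deg v) = 2 * num_edges V E"
proof -
  let ?T = "edge_set V E"
  have finite_T: "finite ?T"
    by (rule finite_subset[of _ "Pow V"]) (auto simp: edge_set_def finite_V)
  have ends: "card {v \<in> V. v \<in> e} = 2" if e: "e \<in> ?T" for e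
  proof -
    obtain a b where "e = {a, b}" "a \<in> V" "b \<in> V" "E a b"
      using e unfolding edge_set_def by blast
    moreover have "a \<noteq> b" using \<open>E a b\<close> by auto
    ultimately have "{v \<in> V. v \<in> e} = {a, b}" "card {a, b} = 2" by auto
    then show ?thesis by simp
  qed
  have incident: "card {e \<in> ?T. v \<in> e} = deg v" if "v \<in> V" for v
  proof -
    have "bij_betw (\<lambda>u. {v, u}) (nbhd v) {e \<in> ?T. v \<in> e}"
    proof (rule bij_betw_imageI)
      show "inj_on (\<lambda>u. {v, u}) (nbhd v)"
        by (auto simp: inj_on_def doubleton_eq_iff)
      show "(\<lambda>u. {v, u}) ` nbhd v = {e \<in> ?T. v \<in> e}"
      proof (intro equalityI subsetI)
        fix e assume "e \<in> (\<lambda>u. {v, u}) ` nbhd v"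
        then show "e \<in> {e \<in> ?T. v \<in> e}" using that unfolding edge_set_def by blast
      next
        fix e assume "e \<in> {e \<in> ?T. v \<in> e}"
        then obtain u where "e = {v, u}" "E v u"
          unfolding edge_set_def by (auto simp: insert_commute dest: edge_sym)
        then show "e \<in> (\<lambda>u. {v, u}) ` nbhd v"
          using edge_in_V by blast
      qed
    qed
    then show ?thesis by (simp add: bij_betw_same_card degree_eq_card_nbhd)
  qed
  have "(\<Sum>v\<in>V. card {e \<in> ?T. v \<in> e}) = 2 * card ?T"
    by (rule sum_multicount[OF finite_V finite_T]) (use ends in blast)
  then show ?thesis
    using incident unfolding num_edges_def by simp
qed

end

locale equal_degree_path3_free = finite_simple_graph +
  assumes no_path3:
    "\<forall>a\<in>V. \<forall>b\<in>V. a \<noteq> b \<and> degree V E a = degree V E b \<longrightarrow> \<not> path3 V E a b"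
begin

lemma no_equal_degree_walk3:
  assumes "E a p" "E p q" "E q b" "a \<noteq> q" "p \<noteq> b" "a \<noteq> b" "deg a = deg b"
  shows False
proof -
  have "distinct [a, p, q, b]" using assms by auto
  then have "path3 V E a b" unfolding path3_def using assms edge_in_V by blast
  then show False using no_path3 assms edge_in_V by blast
qed

end

locale max_degree_vertex = equal_degree_path3_free +
  fixes n :: nat and x :: 'a
  assumes n_ge_2: "2 \<le> n" and card_V: "card V = 2 * n + 1"
    and many_edges: "n ^ 2 + n \<le> num_edges V E"
    and x_in_V: "x \<in> V" and degree_le_max: "v \<in> V \<Longrightarrow> degree V E v \<le> degree V E x"
begin

abbreviation "Y \<equiv> nbhd x"
abbreviation "R \<equiv> V - Y"
abbreviation "\<Delta> \<equiv> deg x"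
abbreviation "\<rho> \<equiv> card R"
definition j :: nat where "j = n - \<rho>"

lemma finite_Y: "finite Y"
  by (rule finite_nbhd)

lemma finite_R: "finite R"
  using finite_V by simp

lemma x_in_R: "x \<in> R"
  using x_in_V by simp

lemma card_Y: "card Y = \<Delta>"
  by (simp add: degree_eq_card_nbhd)

lemma card_R_plus_Delta: "\<rho> + \<Delta> = 2 * n + 1"
proof -
  have "R \<union> Y = V" "R \<inter> Y = {}" by auto
  then show ?thesis
    using card_Un_disjoint[OF finite_R finite_Y] card_V card_Y by simp
qed

lemma sum_degree_ge: "2 * (n ^ 2 + n) \<le> (\<Sum>v\<in>Y. deg v) + (\<Sum>v\<in>R. deg v)"
  using sum_degree_eq_twice_num_edges many_edges sum.subset_diff[of Y V deg] finite_V
  by simp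

lemma sum_R_degree_le: "(\<Sum>v\<in>R. deg v) \<le> \<rho> * \<Delta>"
  using sum_bounded_above[of R deg \<Delta>] degree_le_max by simp

lemma n_less_Delta: "n < \<Delta>"
proof (rule ccontr)
  assume "\<not> n < \<Delta>"
  then have "(\<Sum>v\<in>V. deg v) \<le> (2 * n + 1) * n"
    using sum_bounded_above[of V deg n] degree_le_max card_V by fastforce
  then show False
    using sum_degree_eq_twice_num_edges many_edges n_ge_2
    by (simp add: power2_eq_square algebra_simps)
qed

lemma n_eq: "n = \<rho> + j"
  using card_R_plus_Delta n_less_Delta unfolding j_def by simp

lemma Delta_eq: "\<Delta> = \<rho> + 2 * j + 1"
  using card_R_plus_Delta n_less_Delta unfolding j_def by simp

lemma sum_degree_excess:
  "2 * (\<rho> * \<Delta>) + 2 * (j * j) + 2 * j \<le> (\<Sum>v\<in>Y. deg v) + (\<Sum>v\<in>R. deg v)"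
proof -
  have "2 * (n ^ 2 + n) = 2 * (r * d) + 2 * (i * i) + 2 * i"
    if "n = r + i" "d = r + 2 * i + 1" for r d i
    using that by (simp add: power2_eq_square algebra_simps)
  from this[OF n_eq Delta_eq] show ?thesis
    using sum_degree_ge by simp
qed

lemma nbhd_subset_of_twin:
  assumes "y \<in> Y" "b \<in> Y" "y \<noteq> b" "deg y = deg b"
  shows "nbhd b \<subseteq> insert y R"
proof
  fix z assume z: "z \<in> nbhd b"
  show "z \<in> insert y R"
  proof (rule ccontr)
    assume "z \<notin> insert y R"
    then have "E x z" "y \<noteq> z" using z by auto
    moreover have "E y x" "E z b" "x \<noteq> b" using assms z edge_sym by auto
    ultimately show False
      using no_equal_degree_walk3[of y x z b] assms by blast
  qed
qed

lemma degree_twin_le: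
  assumes "y \<in> Y" "b \<in> Y" "y \<noteq> b" "deg y = deg b"
  shows "deg b \<le> \<rho> + 1"
proof -
  have "deg b \<le> card (insert y R)"
    by (rule degree_le_card[OF nbhd_subset_of_twin[OF assms]]) (simp add: finite_R)
  then show ?thesis
    using card_insert_le_m1 finite_R by (simp add: card_insert_if split: if_splits)
qed

lemma nbhd_twin_eq:
  assumes "y \<in> Y" "b \<in> Y" "y \<noteq> b" "deg y = \<rho> + 1" "deg b = \<rho> + 1"
  shows "nbhd b = insert y R"
  using nbhd_eq_if_card_le_degree[OF nbhd_subset_of_twin] assms finite_R by simp

lemma inj_on_degree_ge: "inj_on deg {y \<in> Y. \<rho> + 2 \<le> deg y}"
proof (rule inj_onI)
  fix a b assume a: "a \<in> {y \<in> Y. \<rho> + 2 \<le> deg y}" and b: "b \<in> {y \<in> Y. \<rho> + 2 \<le> deg y}"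
    and "deg a = deg b"
  show "a = b"
  proof (rule ccontr)
    assume "a \<noteq> b"
    then have "deg b \<le> \<rho> + 1"
      using degree_twin_le[of a b] a b \<open>deg a = deg b\<close> by blast
    then show False using b by simp
  qed
qed

lemma card_degree_Suc_rho_le_2: "card {y \<in> Y. deg y = \<rho> + 1} \<le> 2"
proof (rule ccontr)
  assume "\<not> ?thesis"
  then obtain T where "T \<subseteq> {y \<in> Y. deg y = \<rho> + 1}" "card T = 3"
    using obtain_subset_with_card_n[of 3 "{y \<in> Y. deg y = \<rho> + 1}"] by force
  then obtain a b c where "{a, b, c} \<subseteq> {y \<in> Y. deg y = \<rho> + 1}" "a \<noteq> b" "b \<noteq> c" "a \<noteq> c"
    unfolding card_3_iff by blast
  then have "a \<in> Y" "b \<in> Y" "c \<in> Y" "a \<noteq> b" "b \<noteq> c" "a \<noteq> c"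
    and "deg a = \<rho> + 1" "deg b = \<rho> + 1" "deg c = \<rho> + 1"
    by auto
  then have "nbhd b = insert a R" "nbhd b = insert c R"
    using nbhd_twin_eq[of a b] nbhd_twin_eq[of c b] by auto
  then have "insert a R = insert c R"
    by simp
  then show False
    using \<open>a \<in> Y\<close> \<open>c \<in> Y\<close> \<open>a \<noteq> c\<close> by blast
qed

lemma sum_Y_degree_le:
  assumes "\<And>y. y \<in> Y \<Longrightarrow> deg y \<le> \<rho> + t"
  shows "(\<Sum>y\<in>Y. deg y) \<le> \<rho> * \<Delta> + card {y \<in> Y. deg y = \<rho> + 1} + \<Sum>{2..t}"
proof -
  have "(\<Sum>y\<in>Y. deg y) \<le> (\<Sum>y\<in>Y. \<rho> + (deg y - \<rho>))"
    by (rule sum_mono) simp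
  also have "\<dots> = \<rho> * \<Delta> + (\<Sum>y\<in>Y. deg y - \<rho>)"
    by (simp add: sum.distrib card_Y)
  finally have "(\<Sum>y\<in>Y. deg y) \<le> \<rho> * \<Delta> + (\<Sum>y\<in>Y. deg y - \<rho>)" .
  moreover have "(\<Sum>y\<in>Y. deg y - \<rho>) \<le> card {y \<in> Y. deg y - \<rho> = 1} + \<Sum>{2..t}"
  proof (rule sum_le_if_inj_on_ge_2[OF finite_Y])
    show "deg y - \<rho> \<le> t" if "y \<in> Y" for y
      using assms[OF that] by simp
    show "inj_on (\<lambda>y. deg y - \<rho>) {y \<in> Y. 2 \<le> deg y - \<rho>}"
    proof (rule inj_onI)
      fix a b assume "a \<in> {y \<in> Y. 2 \<le> deg y - \<rho>}" "b \<in> {y \<in> Y. 2 \<le> deg y - \<rho>}"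
        and "deg a - \<rho> = deg b - \<rho>"
      then have "a \<in> {y \<in> Y. \<rho> + 2 \<le> deg y}" "b \<in> {y \<in> Y. \<rho> + 2 \<le> deg y}"
        and "deg a = deg b"
        by auto
      then show "a = b" using inj_onD[OF inj_on_degree_ge] by blast
    qed
  qed
  moreover have "{y \<in> Y. deg y - \<rho> = 1} = {y \<in> Y. deg y = \<rho> + 1}"
    by auto
  ultimately show ?thesis by simp
qed

lemma Delta_degree_unique:
  assumes "j = 0" "y \<in> Y" "b \<in> Y" "deg y = \<Delta>" "deg b = \<Delta>"
  shows "y = b"
proof (rule ccontr)
  assume "y \<noteq> b"
  have "\<Delta> = \<rho> + 1" using Delta_eq \<open>j = 0\<close> by simp
  then have nbhd_b: "nbhd b = insert y R" and nbhd_y: "nbhd y = insert b R"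
    using nbhd_twin_eq[of y b] nbhd_twin_eq[of b y] assms \<open>y \<noteq> b\<close> by auto
  have "2 \<le> \<rho>" using n_eq n_ge_2 \<open>j = 0\<close> by linarith
  have "\<not> R \<subseteq> {x}"
  proof
    assume "R \<subseteq> {x}"
    then have "\<rho> \<le> 1" using card_mono[of "{x}" R] by simp
    with \<open>2 \<le> \<rho>\<close> show False by simp
  qed
  then obtain r where "r \<in> R" "r \<noteq> x" by blast
  then have "E x b" "E b r" "E r y"
    using assms nbhd_b nbhd_y edge_sym by auto
  then show False
    using no_equal_degree_walk3[of x b r y] \<open>r \<noteq> x\<close> \<open>y \<noteq> b\<close> assms edge_neq by auto
qed

lemma inj_on_degree_co_neighbours:
  assumes "y0 \<in> Y" "Y - {y0} \<subseteq> nbhd y0"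
  shows "inj_on deg (Y - {y0})"
proof (rule inj_onI)
  fix w w' assume w: "w \<in> Y - {y0}" and w': "w' \<in> Y - {y0}" and "deg w = deg w'"
  show "w = w'"
  proof (rule ccontr)
    assume "w \<noteq> w'"
    have "E w x" "E x y0" "E y0 w'" using w w' assms edge_sym by auto
    then show False
      using no_equal_degree_walk3[of w x y0 w'] w w' \<open>w \<noteq> w'\<close> \<open>deg w = deg w'\<close> edge_neq
      by auto
  qed
qed

lemma degree_co_neighbour_bounds:
  assumes y0: "y0 \<in> Y" "deg y0 = \<Delta>" and nbhd_y0: "nbhd y0 = insert x (Y - {y0})"
    and w: "w \<in> Y - {y0}"
  shows "2 \<le> deg w \<and> deg w \<le> \<rho> + 1 \<and> deg w \<noteq> \<Delta>"
proof (intro conjI)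
  have "{x, y0} \<subseteq> nbhd w"
    using w y0 nbhd_y0 edge_sym x_in_V by auto
  then show "2 \<le> deg w"
    using card_le_degree[of "{x, y0}" w] y0 edge_neq by auto
  have "\<not> E w z" if "z \<in> Y - {y0}" for z
  proof
    assume "E w z"
    moreover have "E x w" "E z y0" using w that nbhd_y0 edge_sym by auto
    ultimately show False
      using no_equal_degree_walk3[of x w z y0] y0 w that edge_neq by auto
  qed
  then have "nbhd w \<subseteq> insert y0 R" by auto
  then have "deg w \<le> card (insert y0 R)" by (rule degree_le_card) (simp add: finite_R)
  then show "deg w \<le> \<rho> + 1"
    using y0 finite_R by simp
  show "deg w \<noteq> \<Delta>"
  proof (cases "j = 0")
    case True
    then show ?thesis using Delta_degree_unique[of w y0] w y0 by auto
  next
    case False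
    then show ?thesis using \<open>deg w \<le> \<rho> + 1\<close> Delta_eq by simp
  qed
qed

lemma Delta_neighbour_has_outer_neighbour:
  assumes y0: "y0 \<in> Y" "deg y0 = \<Delta>"
  shows "\<exists>r \<in> R - {x}. E y0 r"
  \<comment> \<open>Otherwise N(y0) = {x} \<union> (Y - {y0}), and the \<Delta> - 1 vertices of Y - {y0} would need
     distinct degrees in {2..\<rho> + 1} - {\<Delta>}.\<close>
proof (rule ccontr)
  assume none: "\<not> ?thesis"
  let ?W = "Y - {y0}"
  have card_W: "card ?W = \<Delta> - 1"
    using y0 card_Y finite_Y by simp
  have "nbhd y0 \<subseteq> insert x ?W"
    using none by auto
  moreover have "card (insert x ?W) \<le> deg y0"
    using card_W finite_Y n_less_Delta y0 by simp
  ultimately have nbhd_y0: "nbhd y0 = insert x ?W"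
    using nbhd_eq_if_card_le_degree finite_Y by blast
  have "inj_on deg ?W"
    by (rule inj_on_degree_co_neighbours) (use y0 nbhd_y0 in auto)
  moreover have "deg ` ?W \<subseteq> {2..\<rho> + 1} - {\<Delta>}"
    using degree_co_neighbour_bounds[OF y0 nbhd_y0] by auto
  ultimately have "\<Delta> - 1 \<le> card ({2..\<rho> + 1} - {\<Delta>})"
    using card_inj_on_le[of deg ?W] card_W by simp
  moreover have "card ({2..\<rho> + 1} - {\<Delta>}) < \<Delta> - 1"
  proof (cases "j = 0")
    case True
    then have "\<Delta> = \<rho> + 1" "2 \<le> \<rho>" using Delta_eq n_eq n_ge_2 by linarith+
    then show ?thesis by simp
  next
    case False
    have "card ({2..\<rho> + 1} - {\<Delta>}) \<le> \<rho>"
      using card_Diff1_le[of "{2..\<rho> + 1}" \<Delta>] by simp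
    then show ?thesis using False Delta_eq by linarith
  qed
  ultimately show False by simp
qed

lemma degree_outer_neighbour_less:
  assumes y0: "y0 \<in> Y" "deg y0 = \<Delta>" and r: "r \<in> R" "r \<noteq> x" "E y0 r"
  shows "deg r < \<rho>"
proof -
  have "nbhd r \<subseteq> insert y0 (R - {x, r})"
  proof
    fix z assume z: "z \<in> nbhd r"
    have "z = y0" if "z \<in> Y"
    proof (rule ccontr)
      assume "z \<noteq> y0"
      have "E x z" "E z r" "E r y0" using that z r edge_sym by auto
      then show False
        using no_equal_degree_walk3[of x z r y0] \<open>z \<noteq> y0\<close> r y0 by auto
    qed
    moreover have "z \<noteq> x" "z \<noteq> r" using z r edge_sym by auto
    ultimately show "z \<in> insert y0 (R - {x, r})" using z by blast
  qed
  then have "deg r \<le> card (insert y0 (R - {x, r}))"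
    by (rule degree_le_card) (simp add: finite_R)
  moreover have "card (insert y0 (R - {x, r})) = Suc (card (R - {x, r}))"
    using y0 finite_R by simp
  moreover have "card (R - {x, r}) = \<rho> - 2" "2 \<le> \<rho>"
    using card_Diff_subset[of "{x, r}" R] card_mono[OF finite_R, of "{x, r}"] x_in_R r by auto
  ultimately show ?thesis by linarith
qed

lemma sum_R_degree_deficit:
  assumes "r \<in> R" "deg r < \<rho>"
  shows "(\<Sum>v\<in>R. deg v) + \<Delta> + 1 \<le> \<rho> * \<Delta> + \<rho>"
proof -
  have "(\<Sum>v\<in>R - {r}. deg v) \<le> (\<rho> - 1) * \<Delta>"
    using sum_bounded_above[of "R - {r}" deg \<Delta>] degree_le_max assms(1) finite_R by simp
  moreover have "(\<Sum>v\<in>R. deg v) = deg r + (\<Sum>v\<in>R - {r}. deg v)"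
    by (rule sum.remove[OF finite_R assms(1)])
  moreover obtain k where "\<rho> = Suc k"
    using assms(2) by (cases \<rho>) auto
  ultimately show ?thesis using assms(2) by simp
qed

lemma degree_less_Delta:
  assumes "y \<in> Y"
  shows "deg y < \<Delta>"
proof (rule ccontr)
  assume "\<not> deg y < \<Delta>"
  then have y: "y \<in> Y" "deg y = \<Delta>"
    using assms degree_le_max[of y] by auto
  then obtain r where "r \<in> R - {x}" "E y r"
    using Delta_neighbour_has_outer_neighbour by blast
  then have "deg r < \<rho>"
    using degree_outer_neighbour_less y by blast
  \<comment> \<open>The deficit 2j + 2 of r outweighs the excess that Y can carry.\<close>
  then have deficit: "(\<Sum>v\<in>R. deg v) + \<Delta> + 1 \<le> \<rho> * \<Delta> + \<rho>"
    using sum_R_degree_deficit \<open>r \<in> R - {x}\<close> by blast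
  define c where "c = card {y \<in> Y. deg y = \<rho> + 1}"
  have "deg v \<le> \<rho> + (2 * j + 1)" if "v \<in> Y" for v
    using degree_le_max[of v] that Delta_eq by simp
  then have "(\<Sum>y\<in>Y. deg y) \<le> \<rho> * \<Delta> + c + \<Sum>{2..2 * j + 1}"
    unfolding c_def by (rule sum_Y_degree_le)
  moreover have "2 * \<Sum>{2..2 * j + 1} = 4 * (j * j) + 6 * j"
    using double_sum_atLeastAtMost_2[of "2 * j + 1"] by (simp add: algebra_simps)
  ultimately have "j + 2 \<le> c"
    using sum_degree_excess deficit Delta_eq by linarith
  moreover have "c \<le> 2"
    unfolding c_def by (rule card_degree_Suc_rho_le_2)
  ultimately have "j = 0" "c = 2" by linarith+
  have "\<rho> + 1 = \<Delta>"
    using Delta_eq \<open>j = 0\<close> by simp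
  then have "\<forall>a\<in>{y \<in> Y. deg y = \<rho> + 1}. \<forall>b\<in>{y \<in> Y. deg y = \<rho> + 1}. a = b"
    using Delta_degree_unique[OF \<open>j = 0\<close>] by auto
  moreover have "finite {y \<in> Y. deg y = \<rho> + 1}"
    using finite_V by simp
  ultimately have "c \<le> Suc 0"
    unfolding c_def using card_le_Suc0_iff_eq by blast
  with \<open>c = 2\<close> show False by simp
qed

lemma degrees_tight_if_j_pos:
  assumes "j \<noteq> 0"
  shows "j = 1 \<and> card {y \<in> Y. deg y = \<rho> + 1} = 2 \<and> (\<exists>u\<in>Y. deg u = \<rho> + 2) \<and> (\<forall>r\<in>R. deg r = \<Delta>)"
proof -
  define c where "c = card {y \<in> Y. deg y = \<rho> + 1}"
  have Y_le: "deg y \<le> \<rho> + 2 * j" if "y \<in> Y" for y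
    using degree_less_Delta[OF that] Delta_eq by simp
  then have sum_Y: "(\<Sum>y\<in>Y. deg y) \<le> \<rho> * \<Delta> + c + \<Sum>{2..2 * j}"
    unfolding c_def by (rule sum_Y_degree_le)
  moreover have "2 * \<Sum>{2..2 * j} + 2 = 4 * (j * j) + 2 * j"
    using double_sum_atLeastAtMost_2[of "2 * j"] assms by (simp add: algebra_simps)
  ultimately have "j + 1 \<le> c"
    using sum_degree_excess sum_R_degree_le by linarith
  moreover have "c \<le> 2"
    unfolding c_def by (rule card_degree_Suc_rho_le_2)
  ultimately have j: "j = 1" and c: "c = 2"
    using assms by linarith+
  have "(\<Sum>y\<in>Y. deg y) \<le> \<rho> * \<Delta> + 4"
    using sum_Y j c by simp
  moreover have excess: "2 * (\<rho> * \<Delta>) + 4 \<le> (\<Sum>v\<in>Y. deg v) + (\<Sum>v\<in>R. deg v)"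
    using sum_degree_excess j by simp
  ultimately have "\<rho> * \<Delta> \<le> (\<Sum>v\<in>R. deg v)"
    by linarith
  then have "deg r = \<Delta>" if "r \<in> R" for r
    by (rule eq_bound_if_sum_ge[OF finite_R, of deg \<Delta>, rotated]) (use degree_le_max that in auto)
  moreover have "\<exists>u\<in>Y. deg u = \<rho> + 2"
  proof (rule ccontr)
    assume none: "\<not> ?thesis"
    have "deg y \<le> \<rho> + 1" if "y \<in> Y" for y
    proof -
      have "deg y \<noteq> \<rho> + 2" using none that by blast
      then show ?thesis using Y_le[OF that] j by linarith
    qed
    then have "(\<Sum>y\<in>Y. deg y) \<le> \<rho> * \<Delta> + c + \<Sum>{2..1}"
      unfolding c_def by (rule sum_Y_degree_le)
    moreover have "\<Sum>{2..1::nat} = 0" by simp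
    ultimately show False
      using c excess sum_R_degree_le by linarith
  qed
  ultimately show ?thesis using j c unfolding c_def by blast
qed

lemma nbhd_R_eq_Y_if_twins:
  assumes "y \<in> Y" "b \<in> Y" "y \<noteq> b" "deg y = \<rho> + 1" "deg b = \<rho> + 1"
    and R_full: "\<forall>r\<in>R. deg r = \<Delta>" and "r \<in> R"
  shows "nbhd r = Y"
proof (rule nbhd_eq_if_card_le_degree)
  have nbhd_b: "nbhd b = insert y R" and nbhd_y: "nbhd y = insert b R"
    using nbhd_twin_eq[of y b] nbhd_twin_eq[of b y] assms by auto
  have "\<not> E r r'" if "r' \<in> R" for r'
  proof
    assume "E r r'"
    moreover have "E y r" using nbhd_y \<open>r \<in> R\<close> by auto
    moreover have "E r' b" using nbhd_b that edge_sym[of b r'] by blast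
    moreover have "y \<noteq> r'" "r \<noteq> b" using assms that by auto
    ultimately show False
      using no_equal_degree_walk3[of y r r' b] \<open>y \<noteq> b\<close> assms(4,5) by simp
  qed
  then show "nbhd r \<subseteq> Y" by auto
  show "card Y \<le> deg r" using R_full \<open>r \<in> R\<close> card_Y by simp
qed (rule finite_Y)

lemma j_eq_0: "j = 0"
proof (rule ccontr)
  assume "j \<noteq> 0"
  then have j: "j = 1" and "card {y \<in> Y. deg y = \<rho> + 1} = 2"
    and "\<exists>u\<in>Y. deg u = \<rho> + 2" and R_full: "\<forall>r\<in>R. deg r = \<Delta>"
    using degrees_tight_if_j_pos by auto
  then obtain y b where twins: "{y \<in> Y. deg y = \<rho> + 1} = {y, b}" "y \<noteq> b"
    unfolding card_2_iff by blast
  then have y: "y \<in> Y" "deg y = \<rho> + 1" and b: "b \<in> Y" "deg b = \<rho> + 1"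
    by auto
  obtain u where u: "u \<in> Y" "deg u = \<rho> + 2"
    using \<open>\<exists>u\<in>Y. deg u = \<rho> + 2\<close> by blast
  \<comment> \<open>A neighbour w of u in Y is adjacent to u and to all of R, so its degree \<rho> + 1 or \<rho> + 2
     is already taken.\<close>
  have "\<not> nbhd u \<subseteq> R"
    using degree_le_card[of u R] finite_R u by auto
  then obtain w where w: "w \<in> Y" "E u w" by auto
  have nbhd_R: "nbhd r = Y" if "r \<in> R" for r
    using nbhd_R_eq_Y_if_twins[OF y(1) b(1) twins(2) y(2) b(2) R_full that] .
  have "insert u R \<subseteq> nbhd w"
  proof
    fix z assume "z \<in> insert u R"
    then have "E z w" using w nbhd_R by blast
    then show "z \<in> nbhd w" using edge_sym edge_in_V by blast
  qed
  then have "\<rho> + 1 \<le> deg w"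
    using card_le_degree[of "insert u R" w] u finite_R by simp
  moreover have "deg w \<le> \<rho> + 2"
    using degree_less_Delta[OF w(1)] Delta_eq j by simp
  moreover have "deg w \<noteq> \<rho> + 1"
  proof
    assume "deg w = \<rho> + 1"
    then have "w = y \<or> w = b" using twins w by blast
    moreover have "u \<in> nbhd w" using w edge_sym edge_in_V by blast
    ultimately have "u \<in> insert b R \<or> u \<in> insert y R"
      using nbhd_twin_eq[of y b] nbhd_twin_eq[of b y] y b twins by auto
    then show False using u y b by auto
  qed
  moreover have "deg w \<noteq> \<rho> + 2"
    using inj_onD[OF inj_on_degree_ge, of w u] u w edge_neq by auto
  ultimately show False by linarith
qed

lemma degrees_regular: "(\<forall>y\<in>Y. deg y = \<rho>) \<and> (\<forall>r\<in>R. deg r = \<Delta>)"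
proof -
  have Y_le: "deg y \<le> \<rho>" if "y \<in> Y" for y
    using degree_less_Delta[OF that] Delta_eq j_eq_0 by simp
  have "(\<Sum>y\<in>Y. deg y) \<le> card Y * \<rho>"
    using sum_bounded_above[of Y deg \<rho>] Y_le by simp
  moreover have "card Y * \<rho> = \<rho> * \<Delta>" "card R * \<Delta> = \<rho> * \<Delta>"
    using card_Y by simp_all
  moreover have "2 * (\<rho> * \<Delta>) \<le> (\<Sum>v\<in>Y. deg v) + (\<Sum>v\<in>R. deg v)"
    using sum_degree_excess j_eq_0 by simp
  ultimately have "card Y * \<rho> \<le> (\<Sum>y\<in>Y. deg y)" "card R * \<Delta> \<le> (\<Sum>v\<in>R. deg v)"
    using sum_R_degree_le by linarith+
  then show ?thesis
    using eq_bound_if_sum_ge[OF finite_Y, of deg \<rho>] eq_bound_if_sum_ge[OF finite_R, of deg \<Delta>]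
      Y_le degree_le_max by blast
qed

lemma Y_independent:
  assumes "y \<in> Y" "y' \<in> Y"
  shows "\<not> E y y'"
proof
  assume "E y y'"
  have "card Y - card {y, y'} \<le> card (Y - {y, y'})"
    by (rule diff_card_le_card_Diff) simp
  moreover have "card Y = n + 1"
    using card_Y Delta_eq n_eq j_eq_0 by linarith
  moreover have "card {y, y'} \<le> 2"
    by (simp add: card_insert_le_m1)
  ultimately have "card (Y - {y, y'}) \<noteq> 0"
    using n_ge_2 by linarith
  then have "Y - {y, y'} \<noteq> {}"
    by (metis card.empty)
  then obtain z where z: "z \<in> Y" "z \<noteq> y" "z \<noteq> y'"
    by blast
  have "E y' x" "E x z" using assms(2) z edge_sym[of x y'] by simp_all
  moreover have "deg y = deg z" using degrees_regular assms(1) z(1) by simp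
  moreover have "y \<noteq> x" using assms(1) by auto
  ultimately show False
    using no_equal_degree_walk3[of y y' x z] \<open>E y y'\<close> z by simp
qed

lemma complete_bipartite_R_Y:
  "card R = n" "card Y = n + 1" "\<forall>u\<in>V. \<forall>v\<in>V. E u v \<longleftrightarrow> (u \<in> R \<and> v \<in> Y) \<or> (u \<in> Y \<and> v \<in> R)"
proof -
  show "card R = n" "card Y = n + 1"
    using card_Y Delta_eq n_eq j_eq_0 by linarith+
  have nbhd_Y: "nbhd y = R" if "y \<in> Y" for y
  proof (rule nbhd_eq_if_card_le_degree)
    show "nbhd y \<subseteq> R" using Y_independent[OF that] by blast
    show "card R \<le> deg y" using degrees_regular that by simp
  qed (rule finite_R)
  have nbhd_R: "nbhd r = Y" if "r \<in> R" for r
  proof -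
    have "Y \<subseteq> nbhd r"
      using nbhd_Y that edge_sym by blast
    moreover have "card Y = card (nbhd r)"
      using degrees_regular that card_Y degree_eq_card_nbhd[of r] by simp
    ultimately show ?thesis
      using card_subset_eq[OF finite_nbhd] by blast
  qed
  show "\<forall>u\<in>V. \<forall>v\<in>V. E u v \<longleftrightarrow> (u \<in> R \<and> v \<in> Y) \<or> (u \<in> Y \<and> v \<in> R)"
  proof (intro ballI)
    fix u v assume "u \<in> V" "v \<in> V"
    show "E u v \<longleftrightarrow> (u \<in> R \<and> v \<in> Y) \<or> (u \<in> Y \<and> v \<in> R)"
    proof (cases "u \<in> Y")
      case True
      then show ?thesis using nbhd_Y[OF True] \<open>v \<in> V\<close> by blast
    next
      case False
      then show ?thesis using nbhd_R[of u] \<open>u \<in> V\<close> \<open>v \<in> V\<close> by blast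
    qed
  qed
qed

end

theorem theorem1p3:
  fixes n :: nat and V :: "'a set" and E :: "'a \<Rightarrow> 'a \<Rightarrow> bool"
  assumes "n \<ge> 2"
    and "simple_graph V E"
    and "card V = 2 * n + 1"
    and "num_edges V E \<ge> n ^ 2 + n"
    and "\<forall>a\<in>V. \<forall>b\<in>V. a \<noteq> b \<and> degree V E a = degree V E b \<longrightarrow> \<not> path3 V E a b"
  shows "graph_iso V E (Kbip_verts n (n + 1)) (Kbip_edge n (n + 1))"
proof -
  interpret equal_degree_path3_free V E
    using assms(2,5) by unfold_locales
  have "V \<noteq> {}" using assms(3) by auto
  then obtain x where x: "x \<in> V" "\<And>v. v \<in> V \<Longrightarrow> deg v \<le> deg x"
    using exists_max_degree by blast
  interpret max_degree_vertex V E n x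
    by unfold_locales (use assms x in auto)
  have V: "R \<union> Y = V" by blast
  have "graph_iso (R \<union> Y) E (Kbip_verts n (n + 1)) (Kbip_edge n (n + 1))"
  proof (rule graph_iso_Kbip_if_complete_bipartite)
    show "\<forall>u\<in>R \<union> Y. \<forall>v\<in>R \<union> Y. E u v \<longleftrightarrow> (u \<in> R \<and> v \<in> Y) \<or> (u \<in> Y \<and> v \<in> R)"
      unfolding V by (rule complete_bipartite_R_Y(3))
  qed (use finite_R finite_Y complete_bipartite_R_Y(1,2) in auto)
  then show ?thesis unfolding V .
qed

end
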